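(* Let $\alpha,\beta,\gamma\in\Phi^+$ and $w\in W$ with \[\ell(s_\alpha s_\beta s_\gamma w)=\ell(s_\beta s_\gamma w)-1=\ell(s_\gamma w)-2=\ell(w)-3.\] If $(\alpha,\beta)\ne0$ or $(\alpha,\gamma)\neq0$, then there exist $\alpha',\beta',\gamma'\in\Phi^+$ with $(\beta',\gamma')\ne0$, $s_\alpha s_\beta s_\gamma=s_{\alpha'}s_{\beta'}s_{\gamma'}$, and \[\ell(s_{\alpha'}s_{\beta'}s_{\gamma'}w)=\ell(s_{\beta'}s_{\gamma'}w)-1=\ell(s_{\gamma'}w)-2=\ell(w)-3.\]
   Context: $\Phi$ is the (finite, crystallographic) root system of a complex semisimple Lie algebra, $\Phi^+$ its positive roots with respect to a fixed basis, $W$ the Weyl group with length function $\ell$, $(\cdot,\cdot)$ a $W$-invariant scalar product, and $s_\beta$ the reflection in $\beta$. *)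

theory Defs
  imports "HOL-Analysis.Analysis"
begin

text \<open>Roots live in a real Euclidean space 'a; the inner product of 'a is the
scalar product (it is invariant under all reflections defined with it).\<close>

definition root_refl :: "'a::euclidean_space \<Rightarrow> 'a \<Rightarrow> 'a" where
  "root_refl \<alpha> v = v - ((2 * (v \<bullet> \<alpha>)) / (\<alpha> \<bullet> \<alpha>)) *\<^sub>R \<alpha>"

text \<open>Reduced crystallographic root system spanning the ambient space
(root system of a complex semisimple Lie algebra).\<close>
definition root_system :: "'a::euclidean_space set \<Rightarrow> bool" where
  "root_system \<Phi> \<longleftrightarrow>
     finite \<Phi> \<and> 0 \<notin> \<Phi> \<and> span \<Phi> = UNIV \<and>
     (\<forall>\<alpha>\<in>\<Phi>. root_refl \<alpha> ` \<Phi> = \<Phi>) \<and>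
     (\<forall>\<alpha>\<in>\<Phi>. \<forall>\<beta>\<in>\<Phi>. 2 * (\<beta> \<bullet> \<alpha>) / (\<alpha> \<bullet> \<alpha>) \<in> \<int>) \<and>
     (\<forall>\<alpha>\<in>\<Phi>. \<forall>c::real. c *\<^sub>R \<alpha> \<in> \<Phi> \<longrightarrow> c = 1 \<or> c = -1)"

definition root_basis :: "'a::euclidean_space set \<Rightarrow> 'a set \<Rightarrow> bool" where
  "root_basis \<Phi> \<Delta> \<longleftrightarrow>
     \<Delta> \<subseteq> \<Phi> \<and> independent \<Delta> \<and>
     (\<forall>\<alpha>\<in>\<Phi>. \<exists>c. (\<forall>d\<in>\<Delta>. c d \<in> \<int>) \<and> \<alpha> = (\<Sum>d\<in>\<Delta>. c d *\<^sub>R d) \<and>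
                 ((\<forall>d\<in>\<Delta>. c d \<ge> 0) \<or> (\<forall>d\<in>\<Delta>. c d \<le> 0)))"

definition pos_roots :: "'a::euclidean_space set \<Rightarrow> 'a set \<Rightarrow> 'a set" where
  "pos_roots \<Phi> \<Delta> = {\<alpha>\<in>\<Phi>. \<exists>c. (\<forall>d\<in>\<Delta>. c d \<ge> 0) \<and> \<alpha> = (\<Sum>d\<in>\<Delta>. c d *\<^sub>R d)}"

definition refl_prod :: "'a::euclidean_space list \<Rightarrow> 'a \<Rightarrow> 'a" where
  "refl_prod xs = foldr (\<circ>) (map root_refl xs) id"

text \<open>Weyl group: the group generated by the reflections s_alpha, alpha in Phi
(as a set of linear maps; products suffice since reflections are involutions).\<close>
definition weyl_group :: "'a::euclidean_space set \<Rightarrow> ('a \<Rightarrow> 'a) set" where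
  "weyl_group \<Phi> = {refl_prod xs | xs. set xs \<subseteq> \<Phi>}"

definition weyl_length :: "'a::euclidean_space set \<Rightarrow> ('a \<Rightarrow> 'a) \<Rightarrow> nat" where
  "weyl_length \<Delta> w = (LEAST n. \<exists>xs. set xs \<subseteq> \<Delta> \<and> length xs = n \<and> w = refl_prod xs)"

end

theory Submission
  imports Defs
begin

(* Write Y = w^{-1}.  By the exchange condition, l(s_t w) < l(w) for a positive root t exactly
   when Y t is negative.  Hence the three length drops of the hypothesis say precisely that
   gamma, s_gamma beta and s_gamma s_beta alpha are all sent to negative roots by Y; we call
   such a triple a "descent triple" of w.  Conversely a descent triple whose product lowers
   the length by 3 in total realises the three single drops.

   So it suffices to rewrite a descent triple with beta orthogonal to gamma.  The conjugation
   identities s_a s_b = s_{s_a b} s_a (and commutation of s_beta, s_gamma) give four candidate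
   triples with the same product; each is again a descent triple under two sign conditions.
   If all four candidates fail, we evaluate the height function on alpha, beta, gamma and on
   their images under Z = Y s_gamma s_beta: this forces <alpha,beta^v><beta,alpha^v> = 2 and
   <alpha,gamma^v><gamma,alpha^v> = 2, so by Bessel's inequality alpha lies in the span of
   beta and gamma, and the resulting linear relation between the heights is violated. *)

section \<open>Reflections\<close>

lemma root_refl_linear: "linear (root_refl a)"
  by (rule linearI) (simp_all add: root_refl_def inner_add_left algebra_simps add_divide_distrib)

lemma root_refl_inner: "root_refl a u \<bullet> root_refl a v = u \<bullet> v"
proof (cases "a = 0")
  case False
  hence "a \<bullet> a \<noteq> 0" by simp
  thus ?thesis unfolding root_refl_def
    by (simp add: inner_diff_left inner_diff_right algebra_simps inner_commute)
qed (simp add: root_refl_def)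

lemma root_refl_involutive [simp]: "root_refl a (root_refl a v) = v"
proof (cases "a = 0")
  case False
  hence "a \<bullet> a \<noteq> 0" by simp
  thus ?thesis unfolding root_refl_def by (simp add: inner_diff_left algebra_simps)
qed (simp add: root_refl_def)

lemma root_refl_comp_self [simp]: "root_refl a \<circ> root_refl a = id"
  by auto

lemma root_refl_self: "a \<noteq> 0 \<Longrightarrow> root_refl a a = - a"
  by (simp add: root_refl_def algebra_simps scaleR_2)

lemma root_refl_uminus_root [simp]: "root_refl (- a) = root_refl a"
  by (rule ext) (simp add: root_refl_def)

lemma root_refl_uminus [simp]: "root_refl a (- v) = - root_refl a v"
  by (simp add: root_refl_def algebra_simps)

lemma root_refl_orth: "v \<bullet> a = 0 \<Longrightarrow> root_refl a v = v"
  by (simp add: root_refl_def)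

lemma root_refl_conj: "root_refl (root_refl a b) = root_refl a \<circ> root_refl b \<circ> root_refl a"
proof (rule ext)
  fix v
  have l: "linear (root_refl a)" by (rule root_refl_linear)
  have norm: "root_refl a b \<bullet> root_refl a b = b \<bullet> b" by (rule root_refl_inner)
  have coeff: "root_refl a v \<bullet> b = v \<bullet> root_refl a b"
    using root_refl_inner[of a "root_refl a v" b] by simp
  have "(root_refl a \<circ> root_refl b \<circ> root_refl a) v
      = root_refl a (root_refl a v - ((2 * (root_refl a v \<bullet> b)) / (b \<bullet> b)) *\<^sub>R b)"
    by (simp add: root_refl_def)
  also have "\<dots> = v - ((2 * (root_refl a v \<bullet> b)) / (b \<bullet> b)) *\<^sub>R root_refl a b"
    using linear_diff[OF l] linear_cmul[OF l] by simp
  also have "\<dots> = root_refl (root_refl a b) v"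
    unfolding root_refl_def[of "root_refl a b" v] norm coeff ..
  finally show "root_refl (root_refl a b) v = (root_refl a \<circ> root_refl b \<circ> root_refl a) v" ..
qed

lemma root_refl_commute:
  assumes "b \<bullet> c = 0"
  shows "root_refl b (root_refl c v) = root_refl c (root_refl b v)"
proof -
  have "root_refl b c = c" using assms by (simp add: root_refl_orth inner_commute)
  hence "root_refl c = root_refl b \<circ> root_refl c \<circ> root_refl b"
    using root_refl_conj[of b c] by simp
  hence "root_refl c (root_refl b v) = root_refl b (root_refl c v)"
    by (metis comp_apply root_refl_involutive)
  thus ?thesis ..
qed

lemma refl_triple_conj_first:
  "root_refl a \<circ> root_refl b \<circ> root_refl c = root_refl (root_refl a b) \<circ> root_refl a \<circ> root_refl c"
  by (simp add: root_refl_conj fun_eq_iff)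

lemma refl_triple_conj_second:
  "root_refl a \<circ> root_refl b \<circ> root_refl c = root_refl b \<circ> root_refl (root_refl b a) \<circ> root_refl c"
  by (simp add: root_refl_conj fun_eq_iff)

lemma refl_triple_orth_first:
  "b \<bullet> c = 0 \<Longrightarrow>
   root_refl a \<circ> root_refl b \<circ> root_refl c = root_refl (root_refl a c) \<circ> root_refl a \<circ> root_refl b"
  by (simp add: root_refl_conj fun_eq_iff) (metis root_refl_commute)

lemma refl_triple_orth_second:
  "b \<bullet> c = 0 \<Longrightarrow>
   root_refl a \<circ> root_refl b \<circ> root_refl c = root_refl c \<circ> root_refl (root_refl c a) \<circ> root_refl b"
  by (simp add: root_refl_conj fun_eq_iff) (metis root_refl_commute)

lemma refl_prod_Nil [simp]: "refl_prod [] = id"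
  by (simp add: refl_prod_def)

lemma refl_prod_Cons [simp]: "refl_prod (x # xs) = root_refl x \<circ> refl_prod xs"
  by (simp add: refl_prod_def)

lemma refl_prod_append [simp]: "refl_prod (xs @ ys) = refl_prod xs \<circ> refl_prod ys"
  by (induction xs) (auto simp: o_assoc)

lemma refl_prod_linear: "linear (refl_prod xs)"
proof (induction xs)
  case Nil thus ?case using linear_id by (simp add: id_def)
next
  case (Cons a xs) thus ?case
    using linear_compose[OF Cons.IH root_refl_linear[of a]] by (simp add: o_def)
qed

lemma refl_prod_rev_comp: "refl_prod (rev xs) \<circ> refl_prod xs = id"
proof (induction xs)
  case (Cons a xs)
  have "refl_prod (rev (a # xs)) \<circ> refl_prod (a # xs)
      = refl_prod (rev xs) \<circ> (root_refl a \<circ> root_refl a) \<circ> refl_prod xs"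
    by (simp only: refl_prod_append rev.simps refl_prod_Cons refl_prod_Nil o_assoc comp_id)
  also have "\<dots> = id" using Cons.IH by (simp add: fun_eq_iff)
  finally show ?case .
qed simp

lemma inv_refl_prod: "inv (refl_prod xs) = refl_prod (rev xs)"
  using refl_prod_rev_comp[of xs] refl_prod_rev_comp[of "rev xs"]
  by (intro inv_unique_comp) simp_all

section \<open>Positive roots and heights\<close>

locale based_root_system =
  fixes Phi Delta :: "'a::euclidean_space set"
  assumes root_system: "root_system Phi" and basis: "root_basis Phi Delta"
begin

abbreviation pos :: "'a set" where "pos \<equiv> pos_roots Phi Delta"

lemma zero_notin_roots: "0 \<notin> Phi"
  using root_system by (simp add: root_system_def)

lemma root_nonzero: "a \<in> Phi \<Longrightarrow> a \<noteq> 0"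
  using zero_notin_roots by auto

lemma refl_closed: "a \<in> Phi \<Longrightarrow> b \<in> Phi \<Longrightarrow> root_refl a b \<in> Phi"
  using root_system unfolding root_system_def by blast

lemma cartan_integer: "a \<in> Phi \<Longrightarrow> b \<in> Phi \<Longrightarrow> 2 * (b \<bullet> a) / (a \<bullet> a) \<in> \<int>"
  using root_system unfolding root_system_def by blast

lemma reduced: "a \<in> Phi \<Longrightarrow> c *\<^sub>R a \<in> Phi \<Longrightarrow> c = 1 \<or> c = -1"
  using root_system unfolding root_system_def by blast

lemma uminus_closed: "a \<in> Phi \<Longrightarrow> - a \<in> Phi"
  using refl_closed[of a a] root_refl_self[OF root_nonzero] by simp

lemma basis_roots: "Delta \<subseteq> Phi"
  using basis by (simp add: root_basis_def)

lemma finite_basis: "finite Delta"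
  using basis_roots root_system finite_subset by (auto simp: root_system_def)

lemma pos_roots: "t \<in> pos \<Longrightarrow> t \<in> Phi"
  by (simp add: pos_roots_def)

lemma basis_coeff_unique:
  assumes "(\<Sum>d\<in>Delta. a d *\<^sub>R d) = (\<Sum>d\<in>Delta. b d *\<^sub>R d)" "d \<in> Delta"
  shows "a d = b d"
proof (rule ccontr)
  assume "a d \<noteq> b d"
  hence "\<exists>v\<in>Delta. a v - b v \<noteq> 0" using assms(2) by auto
  moreover have "(\<Sum>v\<in>Delta. (a v - b v) *\<^sub>R v) = 0"
    using assms(1) by (simp add: scaleR_diff_left sum_subtractf)
  ultimately have "dependent Delta"
    unfolding dependent_finite[OF finite_basis] by (intro exI[of _ "\<lambda>v. a v - b v"] conjI)
  thus False using basis by (simp add: root_basis_def)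
qed

definition height :: "'a \<Rightarrow> real" where
  "height = (SOME h. linear h \<and> (\<forall>d\<in>Delta. h d = 1))"

lemma height_props: "linear height \<and> (\<forall>d\<in>Delta. height d = 1)"
proof -
  have "independent Delta" using basis by (simp add: root_basis_def)
  from linear_independent_extend[OF this, of "\<lambda>_. 1"]
  have "\<exists>h::'a\<Rightarrow>real. linear h \<and> (\<forall>d\<in>Delta. h d = 1)" by simp
  thus ?thesis unfolding height_def by (rule someI_ex)
qed

lemma height_linear: "linear height"
  using height_props by simp

lemma height_comb: "height (\<Sum>d\<in>Delta. c d *\<^sub>R d) = (\<Sum>d\<in>Delta. c d)"
  using height_props by (simp add: linear_sum linear_scale)

lemma height_refl_image:
  "linear f \<Longrightarrow> height (f (u - c *\<^sub>R v)) = height (f u) - c * height (f v)"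
  using height_linear by (simp add: linear_diff linear_scale)

lemma height_pos: "t \<in> pos \<Longrightarrow> height t > 0"
proof -
  assume t: "t \<in> pos"
  then obtain c where c: "\<forall>d\<in>Delta. c d \<ge> 0" "t = (\<Sum>d\<in>Delta. c d *\<^sub>R d)"
    by (auto simp: pos_roots_def)
  have "(\<Sum>d\<in>Delta. c d) \<noteq> 0"
  proof
    assume "(\<Sum>d\<in>Delta. c d) = 0"
    hence "\<forall>d\<in>Delta. c d = 0" using sum_nonneg_eq_0_iff[OF finite_basis] c(1) by blast
    hence "t = 0" using c(2) by simp
    thus False using root_nonzero[OF pos_roots[OF t]] by blast
  qed
  moreover have "(\<Sum>d\<in>Delta. c d) \<ge> 0" using c by (simp add: sum_nonneg)
  ultimately show ?thesis using c height_comb by simp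
qed

lemma height_neg: "- t \<in> pos \<Longrightarrow> height t < 0"
  using height_pos[of "- t"] linear_neg[OF height_linear] by simp

lemma pos_or_neg: "r \<in> Phi \<Longrightarrow> r \<in> pos \<or> - r \<in> pos"
proof -
  assume r: "r \<in> Phi"
  have "\<forall>\<alpha>\<in>Phi. \<exists>c. (\<forall>d\<in>Delta. c d \<in> \<int>) \<and> \<alpha> = (\<Sum>d\<in>Delta. c d *\<^sub>R d) \<and>
                 ((\<forall>d\<in>Delta. c d \<ge> 0) \<or> (\<forall>d\<in>Delta. c d \<le> 0))"
    using basis unfolding root_basis_def by (elim conjE)
  from bspec[OF this r] obtain c where
    c: "r = (\<Sum>d\<in>Delta. c d *\<^sub>R d)" "(\<forall>d\<in>Delta. c d \<ge> 0) \<or> (\<forall>d\<in>Delta. c d \<le> 0)"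
    by (elim exE conjE) (intro that)
  show ?thesis
  proof (cases "\<forall>d\<in>Delta. c d \<ge> 0")
    case True
    have "r \<in> pos" unfolding pos_roots_def mem_Collect_eq
      using r c(1) True by (intro conjI exI[of _ c]) auto
    thus ?thesis ..
  next
    case False
    hence "\<forall>d\<in>Delta. - c d \<ge> 0" using c by auto
    moreover have "- r = (\<Sum>d\<in>Delta. (- c d) *\<^sub>R d)" using c by (simp add: sum_negf)
    ultimately have "- r \<in> pos" using uminus_closed[OF r] unfolding pos_roots_def mem_Collect_eq
      by (intro conjI exI[of _ "\<lambda>d. - c d"]) auto
    thus ?thesis ..
  qed
qed

lemma height_neg_root: "r \<in> Phi \<Longrightarrow> r \<notin> pos \<Longrightarrow> height r < 0"
  using pos_or_neg height_neg by blast

lemma height_pos_root: "r \<in> Phi \<Longrightarrow> - r \<notin> pos \<Longrightarrow> height r > 0"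
  using pos_or_neg height_pos by blast

lemma not_pos_and_neg: "t \<in> pos \<Longrightarrow> - t \<in> pos \<Longrightarrow> False"
  using height_pos height_neg by fastforce

lemma simple_refl_pos:
  assumes x: "x \<in> Delta" and t: "t \<in> pos" and ne: "t \<noteq> x"
  shows "root_refl x t \<in> pos"
proof (rule ccontr)
  assume "root_refl x t \<notin> pos"
  moreover have "root_refl x t \<in> Phi"
    using refl_closed[of x t] basis_roots x pos_roots[OF t] by blast
  ultimately have "- root_refl x t \<in> pos" using pos_or_neg by blast
  then obtain e where e: "\<forall>d\<in>Delta. e d \<ge> 0" "- root_refl x t = (\<Sum>d\<in>Delta. e d *\<^sub>R d)"
    by (auto simp: pos_roots_def)
  obtain c where c: "\<forall>d\<in>Delta. c d \<ge> 0" "t = (\<Sum>d\<in>Delta. c d *\<^sub>R d)"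
    using t by (auto simp: pos_roots_def)
  define k where "k = 2 * (t \<bullet> x) / (x \<bullet> x)"
  have "(\<Sum>d\<in>Delta. (if d = x then k else 0) *\<^sub>R d) = (\<Sum>d\<in>Delta. if d = x then k *\<^sub>R x else 0)"
    by (rule sum.cong) auto
  hence kx: "(\<Sum>d\<in>Delta. (if d = x then k else 0) *\<^sub>R d) = k *\<^sub>R x"
    using x finite_basis by simp
  have "root_refl x t = (\<Sum>d\<in>Delta. (c d - (if d = x then k else 0)) *\<^sub>R d)"
    unfolding root_refl_def k_def[symmetric] using c(2) kx[symmetric]
    by (simp add: scaleR_diff_left sum_subtractf)
  moreover have "root_refl x t = (\<Sum>d\<in>Delta. (- e d) *\<^sub>R d)"
    by (metis (no_types, lifting) e(2) minus_equation_iff scaleR_minus_left sum.cong sum_negf)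
  ultimately have "\<And>d. d \<in> Delta \<Longrightarrow> - e d = c d - (if d = x then k else 0)"
    using basis_coeff_unique[of "\<lambda>d. - e d" "\<lambda>d. c d - (if d = x then k else 0)"] by simp
  hence vanish: "\<And>d. d \<in> Delta \<Longrightarrow> d \<noteq> x \<Longrightarrow> c d = 0"
    using e(1) c(1) by (metis add.inverse_neutral diff_zero neg_le_0_iff_le order_antisym)
  have "t = (\<Sum>d\<in>Delta. (if d = x then c x *\<^sub>R x else 0))"
    unfolding c(2) by (rule sum.cong) (auto simp: vanish)
  hence tx: "t = c x *\<^sub>R x" using x finite_basis by simp
  hence "c x = 1 \<or> c x = -1" using reduced[of x "c x"] basis_roots x pos_roots[OF t] by blast
  moreover have "c x \<ge> 0" using c(1) x by auto
  ultimately show False using tx ne by auto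
qed

text \<open>A positive non-simple root is sent by some simple reflection to a positive root of
  smaller height (at least by one, the Cartan integers being integral).\<close>
lemma simple_refl_lowers_height:
  assumes t: "t \<in> pos" and nsimple: "t \<notin> Delta"
  shows "\<exists>d\<in>Delta. root_refl d t \<in> pos \<and> height (root_refl d t) \<le> height t - 1"
proof -
  obtain c where c: "\<forall>d\<in>Delta. c d \<ge> 0" "t = (\<Sum>d\<in>Delta. c d *\<^sub>R d)"
    using t by (auto simp: pos_roots_def)
  have tP: "t \<in> Phi" using pos_roots[OF t] .
  have "t \<bullet> t = (\<Sum>d\<in>Delta. c d * (d \<bullet> t))"
    by (subst (1) c(2)) (simp add: inner_sum_left)
  moreover have "t \<bullet> t > 0" using root_nonzero[OF tP] by simp
  ultimately have "\<not> (\<forall>d\<in>Delta. c d * (d \<bullet> t) \<le> 0)"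
    using sum_nonpos[of Delta "\<lambda>d. c d * (d \<bullet> t)"] by force
  then obtain d where d: "d \<in> Delta" "c d * (d \<bullet> t) > 0" by auto
  have dt: "t \<bullet> d > 0"
    using d c(1) by (auto simp: zero_less_mult_iff inner_commute)
  have dP: "d \<in> Phi" using d basis_roots by auto
  define k where "k = 2 * (t \<bullet> d) / (d \<bullet> d)"
  have "k \<in> \<int>" using cartan_integer[OF dP tP] k_def by simp
  then obtain m where m: "k = of_int m" by (rule Ints_cases)
  have "k > 0" using dt root_nonzero[OF dP] unfolding k_def by simp
  hence k1: "k \<ge> 1" using m by simp
  have "height (root_refl d t) = height t - k * height d"
    unfolding root_refl_def k_def[symmetric] using height_linear by (simp add: linear_diff linear_scale)
  also have "\<dots> = height t - k" using height_props d by simp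
  finally have "height (root_refl d t) \<le> height t - 1" using k1 by simp
  moreover have "root_refl d t \<in> pos" using simple_refl_pos[OF d(1) t] nsimple d(1) by auto
  ultimately show ?thesis using d(1) by blast
qed

lemma refl_simple_word: "a \<in> Phi \<Longrightarrow> \<exists>ys. set ys \<subseteq> Delta \<and> root_refl a = refl_prod ys"
proof -
  have pos_case: "t \<in> pos \<Longrightarrow> height t < real n \<Longrightarrow> \<exists>ys. set ys \<subseteq> Delta \<and> root_refl t = refl_prod ys"
    for n t
  proof (induction n arbitrary: t)
    case 0 thus ?case using height_pos by fastforce
  next
    case (Suc n)
    show ?case
    proof (cases "t \<in> Delta")
      case True thus ?thesis by (intro exI[of _ "[t]"]) simp
    next
      case False
      then obtain d where d: "d \<in> Delta" "root_refl d t \<in> pos"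
        "height (root_refl d t) \<le> height t - 1"
        using simple_refl_lowers_height[OF Suc.prems(1)] by blast
      then obtain ys where ys: "set ys \<subseteq> Delta" "root_refl (root_refl d t) = refl_prod ys"
        using Suc.IH Suc.prems(2) by fastforce
      have "root_refl t = root_refl d \<circ> root_refl (root_refl d t) \<circ> root_refl d"
        using root_refl_conj[of d "root_refl d t"] by simp
      also have "\<dots> = refl_prod (d # ys @ [d])" using ys by (simp add: o_assoc)
      finally show ?thesis using ys d by (intro exI[of _ "d # ys @ [d]"]) auto
    qed
  qed
  have "\<exists>ys. set ys \<subseteq> Delta \<and> root_refl t = refl_prod ys" if "t \<in> pos" for t
    using pos_case that reals_Archimedean2 by blast
  moreover assume "a \<in> Phi"
  ultimately show ?thesis using pos_or_neg root_refl_uminus_root by metis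
qed

lemma word_simple: "set xs \<subseteq> Phi \<Longrightarrow> \<exists>ys. set ys \<subseteq> Delta \<and> refl_prod xs = refl_prod ys"
proof (induction xs)
  case (Cons a xs)
  then obtain ys where ys: "set ys \<subseteq> Delta" "refl_prod xs = refl_prod ys" by auto
  obtain zs where zs: "set zs \<subseteq> Delta" "root_refl a = refl_prod zs"
    using refl_simple_word[of a] Cons.prems by auto
  show ?case using ys zs by (intro exI[of _ "zs @ ys"]) auto
qed (intro exI[of _ "[]"], simp)

lemma refl_prod_roots: "set xs \<subseteq> Phi \<Longrightarrow> r \<in> Phi \<Longrightarrow> refl_prod xs r \<in> Phi"
  by (induction xs arbitrary: r) (auto intro: refl_closed)

lemma exchange:
  "set xs \<subseteq> Delta \<Longrightarrow> t \<in> pos \<Longrightarrow> - (refl_prod (rev xs) t) \<in> pos \<Longrightarrow>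
   \<exists>ys. set ys \<subseteq> Delta \<and> length ys < length xs \<and> root_refl t \<circ> refl_prod xs = refl_prod ys"
proof (induction xs arbitrary: t)
  case Nil thus ?case using not_pos_and_neg by auto
next
  case (Cons x xs)
  show ?case
  proof (cases "t = x")
    case True thus ?thesis using Cons.prems by (intro exI[of _ xs]) (auto simp: o_assoc[symmetric])
  next
    case False
    have x: "x \<in> Delta" using Cons.prems by auto
    have "root_refl x t \<in> pos" using simple_refl_pos[OF x Cons.prems(2) False] .
    moreover have "- (refl_prod (rev xs) (root_refl x t)) \<in> pos" using Cons.prems(3) by simp
    moreover have "set xs \<subseteq> Delta" using Cons.prems(1) by simp
    ultimately obtain ys where ys: "set ys \<subseteq> Delta" "length ys < length xs"
        "root_refl (root_refl x t) \<circ> refl_prod xs = refl_prod ys"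
      using Cons.IH by blast
    have "root_refl t \<circ> refl_prod (x # xs) = root_refl x \<circ> (root_refl (root_refl x t) \<circ> refl_prod xs)"
      by (simp add: root_refl_conj fun_eq_iff)
    also have "\<dots> = refl_prod (x # ys)" by (simp only: ys(3) refl_prod_Cons)
    finally have "root_refl t \<circ> refl_prod (x # xs) = refl_prod (x # ys)" .
    moreover have "set (x # ys) \<subseteq> Delta" "length (x # ys) < length (x # xs)" using ys x by auto
    ultimately show ?thesis by blast
  qed
qed

section \<open>The Weyl group and the length of its elements\<close>

abbreviation W :: "('a \<Rightarrow> 'a) set" where "W \<equiv> weyl_group Phi"

abbreviation len :: "('a \<Rightarrow> 'a) \<Rightarrow> nat" where "len \<equiv> weyl_length Delta"

lemma weyl_group_comp_refl: "t \<in> Phi \<Longrightarrow> w \<in> W \<Longrightarrow> root_refl t \<circ> w \<in> W"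
proof -
  assume "t \<in> Phi" "w \<in> W"
  then obtain xs where "set xs \<subseteq> Phi" "w = refl_prod xs" unfolding weyl_group_def by blast
  hence "set (t # xs) \<subseteq> Phi" "root_refl t \<circ> w = refl_prod (t # xs)" using \<open>t \<in> Phi\<close> by auto
  thus ?thesis unfolding weyl_group_def by blast
qed

lemma weyl_inv_linear: "w \<in> W \<Longrightarrow> linear (inv w)"
  unfolding weyl_group_def by (auto simp: inv_refl_prod refl_prod_linear)

lemma weyl_inv_roots: "w \<in> W \<Longrightarrow> r \<in> Phi \<Longrightarrow> inv w r \<in> Phi"
proof -
  assume "w \<in> W" "r \<in> Phi"
  then obtain xs where "set xs \<subseteq> Phi" "w = refl_prod xs" unfolding weyl_group_def by blast
  thus ?thesis using refl_prod_roots[of "rev xs" r] \<open>r \<in> Phi\<close> by (simp add: inv_refl_prod)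
qed

lemma inv_comp_refl: "w \<in> W \<Longrightarrow> inv (root_refl t \<circ> w) = inv w \<circ> root_refl t"
proof -
  assume "w \<in> W"
  then obtain xs where "w = refl_prod xs" unfolding weyl_group_def by blast
  hence "inv (root_refl t \<circ> w) = refl_prod (rev (t # xs))"
    by (simp only: refl_prod_Cons flip: inv_refl_prod)
  thus ?thesis using \<open>w = refl_prod xs\<close> by (simp add: inv_refl_prod)
qed

lemma length_le_word: "set ys \<subseteq> Delta \<Longrightarrow> len (refl_prod ys) \<le> length ys"
  unfolding weyl_length_def by (rule Least_le) blast

lemma reduced_word: "w \<in> W \<Longrightarrow> \<exists>ys. set ys \<subseteq> Delta \<and> length ys = len w \<and> w = refl_prod ys"
proof -
  assume "w \<in> W"
  then obtain xs where "set xs \<subseteq> Phi" "w = refl_prod xs" unfolding weyl_group_def by blast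
  then obtain zs where "set zs \<subseteq> Delta" "w = refl_prod zs" using word_simple by blast
  hence "\<exists>n ys. set ys \<subseteq> Delta \<and> length ys = n \<and> w = refl_prod ys" by blast
  from LeastI_ex[OF this] show ?thesis unfolding weyl_length_def by blast
qed

lemma length_refl_drop:
  assumes w: "w \<in> W" and t: "t \<in> pos" and neg: "- (inv w t) \<in> pos"
  shows "len (root_refl t \<circ> w) + 1 \<le> len w"
proof -
  obtain ds where ds: "set ds \<subseteq> Delta" "length ds = len w" "w = refl_prod ds"
    using reduced_word[OF w] by blast
  have "- (refl_prod (rev ds) t) \<in> pos" using neg ds(3) by (simp add: inv_refl_prod)
  then obtain ys where ys: "set ys \<subseteq> Delta" "length ys < length ds" "root_refl t \<circ> w = refl_prod ys"
    using exchange[OF ds(1) t] ds(3) by blast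
  have "len (root_refl t \<circ> w) \<le> length ys" using length_le_word[OF ys(1)] ys(3) by simp
  thus ?thesis using ys(2) ds(2) by simp
qed

lemma length_refl_rise:
  assumes w: "w \<in> W" and t: "t \<in> pos" and p: "inv w t \<in> pos"
  shows "len w + 1 \<le> len (root_refl t \<circ> w)"
proof -
  have tP: "t \<in> Phi" using pos_roots[OF t] .
  have "inv (root_refl t \<circ> w) t = - inv w t"
    using inv_comp_refl[OF w] root_refl_self[OF root_nonzero[OF tP]] linear_neg[OF weyl_inv_linear[OF w]]
    by simp
  hence "len (root_refl t \<circ> (root_refl t \<circ> w)) + 1 \<le> len (root_refl t \<circ> w)"
    using length_refl_drop[OF weyl_group_comp_refl[OF tP w] t] p by simp
  thus ?thesis by (simp add: o_assoc)
qed

lemma length_less_imp_neg: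
  assumes w: "w \<in> W" and t: "t \<in> pos" and less: "len (root_refl t \<circ> w) < len w"
  shows "- (inv w t) \<in> pos"
proof (rule ccontr)
  assume "- (inv w t) \<notin> pos"
  hence "inv w t \<in> pos" using pos_or_neg[OF weyl_inv_roots[OF w pos_roots[OF t]]] by blast
  thus False using length_refl_rise[OF w t] less by simp
qed

section \<open>Descent triples\<close>

definition length_chain :: "('a \<Rightarrow> 'a) \<Rightarrow> 'a \<Rightarrow> 'a \<Rightarrow> 'a \<Rightarrow> bool" where
  "length_chain w a b c \<longleftrightarrow>
     int (len (root_refl a \<circ> root_refl b \<circ> root_refl c \<circ> w)) = int (len (root_refl b \<circ> root_refl c \<circ> w)) - 1 \<and>
     int (len (root_refl b \<circ> root_refl c \<circ> w)) - 1 = int (len (root_refl c \<circ> w)) - 2 \<and>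
     int (len (root_refl c \<circ> w)) - 2 = int (len w) - 3"

definition descent_triple :: "('a \<Rightarrow> 'a) \<Rightarrow> 'a \<Rightarrow> 'a \<Rightarrow> 'a \<Rightarrow> bool" where
  "descent_triple w a b c \<longleftrightarrow> a \<in> pos \<and> b \<in> pos \<and> c \<in> pos \<and>
     - inv w c \<in> pos \<and> - inv w (root_refl c b) \<in> pos \<and> - inv w (root_refl c (root_refl b a)) \<in> pos"

lemma length_chain_descent:
  assumes w: "w \<in> W" and pos: "a \<in> pos" "b \<in> pos" "c \<in> pos" and chain: "length_chain w a b c"
  shows "descent_triple w a b c"
proof -
  have cw: "root_refl c \<circ> w \<in> W" using weyl_group_comp_refl[OF pos_roots w] pos(3) .
  have bcw: "root_refl b \<circ> (root_refl c \<circ> w) \<in> W" using weyl_group_comp_refl[OF pos_roots cw] pos(2) .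
  have "- inv w c \<in> pos"
    using length_less_imp_neg[OF w pos(3)] chain unfolding length_chain_def by linarith
  moreover have "- inv (root_refl c \<circ> w) b \<in> pos"
    using length_less_imp_neg[OF cw pos(2)] chain unfolding length_chain_def comp_assoc by linarith
  moreover have "- inv (root_refl b \<circ> (root_refl c \<circ> w)) a \<in> pos"
    using length_less_imp_neg[OF bcw pos(1)] chain unfolding length_chain_def comp_assoc by linarith
  ultimately show ?thesis
    using pos inv_comp_refl[OF w] inv_comp_refl[OF cw] unfolding descent_triple_def by simp
qed

text \<open>Conversely, a descent triple whose product lowers the length by 3 realises the chain,
  since each single reflection lowers the length by at least one.\<close>
lemma descent_length_chain:
  assumes w: "w \<in> W" and D: "descent_triple w a b c"
    and total: "int (len (root_refl a \<circ> root_refl b \<circ> root_refl c \<circ> w)) = int (len w) - 3"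
  shows "length_chain w a b c"
proof -
  have pos: "a \<in> pos" "b \<in> pos" "c \<in> pos" using D unfolding descent_triple_def by auto
  have cw: "root_refl c \<circ> w \<in> W" using weyl_group_comp_refl[OF pos_roots w] pos(3) .
  have bcw: "root_refl b \<circ> (root_refl c \<circ> w) \<in> W" using weyl_group_comp_refl[OF pos_roots cw] pos(2) .
  have "len (root_refl c \<circ> w) + 1 \<le> len w"
    using length_refl_drop[OF w pos(3)] D unfolding descent_triple_def by blast
  moreover have "len (root_refl b \<circ> (root_refl c \<circ> w)) + 1 \<le> len (root_refl c \<circ> w)"
    using length_refl_drop[OF cw pos(2)] D inv_comp_refl[OF w] unfolding descent_triple_def by simp
  moreover have "len (root_refl a \<circ> (root_refl b \<circ> (root_refl c \<circ> w))) + 1 \<le> len (root_refl b \<circ> (root_refl c \<circ> w))"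
    using length_refl_drop[OF bcw pos(1)] D inv_comp_refl[OF w] inv_comp_refl[OF cw]
    unfolding descent_triple_def by simp
  ultimately show ?thesis using total unfolding length_chain_def comp_assoc by linarith
qed

lemma descent_triple_conj_first:
  assumes "descent_triple w \<alpha> \<beta> \<gamma>" "root_refl \<alpha> \<beta> \<in> pos" "- inv w (root_refl \<gamma> \<alpha>) \<in> pos"
  shows "descent_triple w (root_refl \<alpha> \<beta>) \<alpha> \<gamma>"
  using assms unfolding descent_triple_def by simp

lemma descent_triple_conj_second:
  assumes w: "w \<in> W" and D: "descent_triple w \<alpha> \<beta> \<gamma>"
    and "root_refl \<beta> \<alpha> \<in> pos" "inv w (root_refl \<gamma> (root_refl \<beta> (root_refl \<alpha> \<beta>))) \<in> pos"
  shows "descent_triple w \<beta> (root_refl \<beta> \<alpha>) \<gamma>"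
proof -
  have "\<beta> \<noteq> 0" using D root_nonzero[OF pos_roots] unfolding descent_triple_def by blast
  hence "root_refl (root_refl \<beta> \<alpha>) \<beta> = - root_refl \<beta> (root_refl \<alpha> \<beta>)"
    by (simp add: root_refl_conj root_refl_self)
  hence "inv w (root_refl \<gamma> (root_refl (root_refl \<beta> \<alpha>) \<beta>)) = - inv w (root_refl \<gamma> (root_refl \<beta> (root_refl \<alpha> \<beta>)))"
    using linear_neg[OF weyl_inv_linear[OF w]] by simp
  thus ?thesis using assms unfolding descent_triple_def by simp
qed

lemma descent_triple_orth_first:
  assumes orth: "\<beta> \<bullet> \<gamma> = 0" and "descent_triple w \<alpha> \<beta> \<gamma>"
    and "root_refl \<alpha> \<gamma> \<in> pos" "- inv w (root_refl \<beta> \<alpha>) \<in> pos"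
  shows "descent_triple w (root_refl \<alpha> \<gamma>) \<alpha> \<beta>"
proof -
  have "root_refl \<gamma> \<beta> = \<beta>" "root_refl \<beta> \<gamma> = \<gamma>"
    using orth by (simp_all add: root_refl_orth inner_commute)
  thus ?thesis using assms unfolding descent_triple_def by simp
qed

lemma descent_triple_orth_second:
  assumes w: "w \<in> W" and orth: "\<beta> \<bullet> \<gamma> = 0" and D: "descent_triple w \<alpha> \<beta> \<gamma>"
    and "root_refl \<gamma> \<alpha> \<in> pos" "inv w (root_refl \<gamma> (root_refl \<beta> (root_refl \<alpha> \<gamma>))) \<in> pos"
  shows "descent_triple w \<gamma> (root_refl \<gamma> \<alpha>) \<beta>"
proof -
  have "\<gamma> \<noteq> 0" using D root_nonzero[OF pos_roots] unfolding descent_triple_def by blast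
  hence "root_refl (root_refl \<gamma> \<alpha>) \<gamma> = - root_refl \<gamma> (root_refl \<alpha> \<gamma>)"
    by (simp add: root_refl_conj root_refl_self)
  hence "inv w (root_refl \<beta> (root_refl (root_refl \<gamma> \<alpha>) \<gamma>)) = - inv w (root_refl \<gamma> (root_refl \<beta> (root_refl \<alpha> \<gamma>)))"
    using linear_neg[OF weyl_inv_linear[OF w]] root_refl_commute[OF orth] by simp
  moreover have "root_refl \<gamma> \<beta> = \<beta>" using orth by (simp add: root_refl_orth)
  ultimately show ?thesis
    using assms root_refl_commute[OF orth, of \<alpha>] unfolding descent_triple_def by simp
qed

end

section \<open>The numerical contradiction\<close>

lemma integer_gt_one: "(k::real) \<in> \<int> \<Longrightarrow> k > 1 \<Longrightarrow> k \<ge> 2"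
proof -
  assume "k \<in> \<int>" "k > 1"
  then obtain m where m: "k = of_int m" "m > 1" by (metis Ints_cases of_int_less_iff of_int_1)
  thus ?thesis by simp
qed

text \<open>Heights of a pair of roots: a1, b1 are heights of alpha and delta, a2, b2 heights of
  their images under a map Z with Z alpha negative and Z delta positive; p, p' are the Cartan
  numbers of the pair.  The disjunctions F1, F3 record that neither rewriting of the pair is
  available; they fix the direction of the inequalities between the heights.\<close>
lemma cartan_pair_directions:
  fixes p p' a1 b1 a2 b2 :: real
  assumes sp: "p * p' > 0" "p > 0 \<longleftrightarrow> p' > 0"
    and h: "a1 > 0" "b1 > 0" "a2 < 0" "b2 > 0"
    and F1: "b1 - p' * a1 < 0 \<or> a2 - p * b2 > 0"
    and F3: "a1 - p * b1 < 0 \<or> b2 - p' * a2 < 0"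
  shows "p > 0 \<Longrightarrow> b1 < p' * a1 \<and> a1 < p * b1"
    and "p < 0 \<Longrightarrow> a2 > p * b2 \<and> b2 < p' * a2"
proof -
  assume p: "p > 0"
  hence p': "p' > 0" using sp(2) by simp
  have "p * b2 > 0" using p h(4) by simp
  hence "b1 < p' * a1" using F1 h(3) by linarith
  moreover have "p' * a2 < 0" using p' h(3) by (simp add: mult_pos_neg)
  hence "a1 < p * b1" using F3 h(4) by linarith
  ultimately show "b1 < p' * a1 \<and> a1 < p * b1" by simp
next
  assume p: "p < 0"
  hence p': "p' < 0" using sp by (meson not_less_iff_gr_or_eq zero_less_mult_iff)
  have "p' * a1 < 0" using p' h(1) by (simp add: mult_neg_pos)
  hence "a2 > p * b2" using F1 h(2) by linarith
  moreover have "p * b1 < 0" using p h(2) by (simp add: mult_neg_pos)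
  hence "b2 < p' * a2" using F3 h(1) by linarith
  ultimately show "a2 > p * b2 \<and> b2 < p' * a2" by simp
qed

text \<open>Under the same hypotheses the product of the Cartan integers is at least 2: combining
  the two inequalities gives b1 < p p' b1 (or the same for b2).\<close>
lemma cartan_pair_bound:
  fixes p p' a1 b1 a2 b2 :: real
  assumes ints: "p \<in> \<int>" "p' \<in> \<int>" and sp: "p * p' > 0" "p > 0 \<longleftrightarrow> p' > 0"
    and h: "a1 > 0" "b1 > 0" "a2 < 0" "b2 > 0"
    and F1: "b1 - p' * a1 < 0 \<or> a2 - p * b2 > 0"
    and F3: "a1 - p * b1 < 0 \<or> b2 - p' * a2 < 0"
  shows "p * p' \<ge> 2"
proof -
  note dir = cartan_pair_directions[OF sp h F1 F3]
  have "p * p' > 1"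
  proof (cases "p > 0")
    case True
    hence p': "p' > 0" using sp(2) by simp
    have "p' * a1 < p' * (p * b1)" using dir(1)[OF True] p' by simp
    hence "1 * b1 < (p * p') * b1" using dir(1)[OF True] by (simp add: algebra_simps)
    thus ?thesis using h(2) by (meson mult_less_cancel_right_pos)
  next
    case False
    hence p: "p < 0" using sp(1) by (cases "p = 0") auto
    hence p': "p' < 0" using sp by (meson not_less_iff_gr_or_eq zero_less_mult_iff)
    have "p' * a2 < p' * (p * b2)" using dir(2)[OF p] p' by simp
    hence "1 * b2 < (p * p') * b2" using dir(2)[OF p] by (simp add: algebra_simps)
    thus ?thesis using h(4) by (meson mult_less_cancel_right_pos)
  qed
  moreover have "p * p' \<in> \<int>" using ints by simp
  ultimately show ?thesis using integer_gt_one by blast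
qed

text \<open>Two such pairs (alpha, beta) and (alpha, gamma) with beta orthogonal to gamma cannot
  coexist: by Bessel's inequality the Cartan products sum to at most 4, with equality only if
  alpha = p/2 beta + q/2 gamma, and this relation contradicts the height inequalities.\<close>
lemma two_pairs_contradiction:
  fixes p p' q q' a1 b1 c1 a2 b2 c2 :: real
  assumes ints: "p \<in> \<int>" "p' \<in> \<int>" "q \<in> \<int>" "q' \<in> \<int>"
    and sp: "p * p' > 0" "p > 0 \<longleftrightarrow> p' > 0" and sq: "q * q' > 0" "q > 0 \<longleftrightarrow> q' > 0"
    and h: "a1 > 0" "b1 > 0" "c1 > 0" "a2 < 0" "b2 > 0" "c2 > 0"
    and bes: "p * p' + q * q' \<le> 4"
    and eq: "p * p' + q * q' = 4 \<Longrightarrow> 2 * a1 = p * b1 + q * c1 \<and> 2 * a2 = p * b2 + q * c2"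
    and F1: "b1 - p' * a1 < 0 \<or> a2 - p * b2 > 0"
    and F3: "a1 - p * b1 < 0 \<or> b2 - p' * a2 < 0"
    and F2: "c1 - q' * a1 < 0 \<or> a2 - q * c2 > 0"
    and F4: "a1 - q * c1 < 0 \<or> c2 - q' * a2 < 0"
  shows False
proof -
  note S = cartan_pair_directions[OF sp h(1,2,4,5) F1 F3]
  note T = cartan_pair_directions[OF sq h(1,3,4,6) F2 F4]
  have pp: "p * p' = 2" "q * q' = 2"
    using cartan_pair_bound[OF ints(1,2) sp h(1,2,4,5) F1 F3]
      cartan_pair_bound[OF ints(3,4) sq h(1,3,4,6) F2 F4] bes by linarith+
  have e: "2 * a1 = p * b1 + q * c1" "2 * a2 = p * b2 + q * c2" using eq pp by auto
  have pz: "p \<noteq> 0" "q \<noteq> 0" using pp by auto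
  show False
  proof (cases "p > 0")
    case pP: True
    show False
    proof (cases "q > 0")
      case True
      thus False using S(1)[OF pP] T(1)[OF True] e by linarith
    next
      case False
      hence q: "q < 0" using pz by simp
      have "p * b1 < p * (p' * a1)" using S(1)[OF pP] pP by simp
      hence "p * b1 < 2 * a1" using pp by (simp add: algebra_simps)
      moreover have "q * c1 < 0" using q h(3) by (simp add: mult_neg_pos)
      ultimately show False using e by linarith
    qed
  next
    case False
    hence pN: "p < 0" using pz by simp
    show False
    proof (cases "q > 0")
      case qP: True
      have "q * c1 < q * (q' * a1)" using T(1)[OF qP] qP by simp
      hence "q * c1 < 2 * a1" using pp by (simp add: algebra_simps)
      moreover have "p * b1 < 0" using pN h(2) by (simp add: mult_neg_pos)
      ultimately show False using e by linarith
    next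
      case False
      hence q: "q < 0" using pz by simp
      show False using S(2)[OF pN] T(2)[OF q] e by linarith
    qed
  qed
qed

lemma bessel_two_orthogonal:
  fixes a b c :: "'a::real_inner"
  assumes bc: "b \<bullet> c = 0" and A: "a \<bullet> a > 0" and B: "b \<bullet> b > 0" and C: "c \<bullet> c > 0"
  defines "p \<equiv> 2 * (a \<bullet> b) / (b \<bullet> b)" and "p' \<equiv> 2 * (a \<bullet> b) / (a \<bullet> a)"
      and "q \<equiv> 2 * (a \<bullet> c) / (c \<bullet> c)" and "q' \<equiv> 2 * (a \<bullet> c) / (a \<bullet> a)"
  shows "p * p' + q * q' \<le> 4" and "p * p' + q * q' = 4 \<Longrightarrow> a = (p / 2) *\<^sub>R b + (q / 2) *\<^sub>R c"
proof -
  define v where "v = a - (p / 2) *\<^sub>R b - (q / 2) *\<^sub>R c"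
  define x where "x = a \<bullet> b"
  define y where "y = a \<bullet> c"
  have cb: "c \<bullet> b = 0" using bc by (simp add: inner_commute)
  have "v \<bullet> v = a \<bullet> a - p * x - q * y + (p/2)^2 * (b \<bullet> b) + (q/2)^2 * (c \<bullet> c)"
    unfolding v_def x_def y_def
    by (simp add: inner_diff_left inner_diff_right inner_add_left inner_add_right bc cb inner_commute power2_eq_square algebra_simps)
  also have "\<dots> = a \<bullet> a - x^2 / (b \<bullet> b) - y^2 / (c \<bullet> c)"
    unfolding p_def q_def x_def[symmetric] y_def[symmetric] using B C
    by (simp add: field_simps power2_eq_square)
  finally have vv: "v \<bullet> v = a \<bullet> a - x^2 / (b \<bullet> b) - y^2 / (c \<bullet> c)" .
  have pq: "p * p' + q * q' = 4 * (x^2 / (b \<bullet> b) + y^2 / (c \<bullet> c)) / (a \<bullet> a)"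
    unfolding p_def p'_def q_def q'_def x_def[symmetric] y_def[symmetric] using A B C
    by (simp add: field_simps power2_eq_square)
  have "x^2 / (b \<bullet> b) + y^2 / (c \<bullet> c) \<le> a \<bullet> a" using vv inner_ge_zero[of v] by linarith
  thus "p * p' + q * q' \<le> 4" unfolding pq using A by (simp add: divide_le_eq)
  assume "p * p' + q * q' = 4"
  hence "x^2 / (b \<bullet> b) + y^2 / (c \<bullet> c) = a \<bullet> a" unfolding pq using A by (simp add: field_simps)
  hence "v \<bullet> v = 0" using vv by simp
  hence "v = 0" by simp
  thus "a = (p / 2) *\<^sub>R b + (q / 2) *\<^sub>R c" unfolding v_def by (simp add: algebra_simps)
qed

context based_root_system
begin

text \<open>Translation of "neither rewriting of the pair (alpha, delta) is available" into the
  height inequalities F1, F3 of cartan_pair_directions and cartan_pair_bound.\<close>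
lemma pair_failure_heights:
  assumes a: "\<alpha> \<in> Phi" and d: "\<delta> \<in> Phi" and lZ: "linear Z" and ZPhi: "\<And>r. r \<in> Phi \<Longrightarrow> Z r \<in> Phi"
    and fail1: "root_refl \<alpha> \<delta> \<notin> pos \<or> - Z (root_refl \<delta> \<alpha>) \<notin> pos"
    and fail2: "root_refl \<delta> \<alpha> \<notin> pos \<or> Z (root_refl \<alpha> \<delta>) \<notin> pos"
  defines "p \<equiv> 2 * (\<alpha> \<bullet> \<delta>) / (\<delta> \<bullet> \<delta>)" and "p' \<equiv> 2 * (\<alpha> \<bullet> \<delta>) / (\<alpha> \<bullet> \<alpha>)"
  shows "height \<delta> - p' * height \<alpha> < 0 \<or> height (Z \<alpha>) - p * height (Z \<delta>) > 0"
    and "height \<alpha> - p * height \<delta> < 0 \<or> height (Z \<delta>) - p' * height (Z \<alpha>) < 0"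
proof -
  have sda: "root_refl \<delta> \<alpha> = \<alpha> - p *\<^sub>R \<delta>" unfolding p_def root_refl_def ..
  have sad: "root_refl \<alpha> \<delta> = \<delta> - p' *\<^sub>R \<alpha>" unfolding p'_def root_refl_def by (simp add: inner_commute)
  have lid: "linear (\<lambda>x::'a. x)" using linear_id by (simp add: id_def)
  have "height (root_refl \<alpha> \<delta>) < 0 \<or> height (Z (root_refl \<delta> \<alpha>)) > 0"
    using fail1 height_neg_root[OF refl_closed[OF a d]] height_pos_root[OF ZPhi[OF refl_closed[OF d a]]]
    by blast
  thus "height \<delta> - p' * height \<alpha> < 0 \<or> height (Z \<alpha>) - p * height (Z \<delta>) > 0"
    unfolding sda sad using height_refl_image[OF lid] height_refl_image[OF lZ] by simp
  have "height (root_refl \<delta> \<alpha>) < 0 \<or> height (Z (root_refl \<alpha> \<delta>)) < 0"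
    using fail2 height_neg_root[OF refl_closed[OF d a]] height_neg_root[OF ZPhi[OF refl_closed[OF a d]]]
    by blast
  thus "height \<alpha> - p * height \<delta> < 0 \<or> height (Z \<delta>) - p' * height (Z \<alpha>) < 0"
    unfolding sda sad using height_refl_image[OF lid] height_refl_image[OF lZ] by simp
qed

lemma some_rewriting_available:
  assumes pos: "\<alpha> \<in> pos" "\<beta> \<in> pos" "\<gamma> \<in> pos" and orth: "\<beta> \<bullet> \<gamma> = 0"
    and ab: "\<alpha> \<bullet> \<beta> \<noteq> 0" and ag: "\<alpha> \<bullet> \<gamma> \<noteq> 0"
    and lZ: "linear Z" and ZPhi: "\<And>r. r \<in> Phi \<Longrightarrow> Z r \<in> Phi"
    and Zsigns: "- Z \<alpha> \<in> pos" "Z \<beta> \<in> pos" "Z \<gamma> \<in> pos"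
    and fail_\<beta>: "root_refl \<alpha> \<beta> \<notin> pos \<or> - Z (root_refl \<beta> \<alpha>) \<notin> pos"
      "root_refl \<beta> \<alpha> \<notin> pos \<or> Z (root_refl \<alpha> \<beta>) \<notin> pos"
    and fail_\<gamma>: "root_refl \<alpha> \<gamma> \<notin> pos \<or> - Z (root_refl \<gamma> \<alpha>) \<notin> pos"
      "root_refl \<gamma> \<alpha> \<notin> pos \<or> Z (root_refl \<alpha> \<gamma>) \<notin> pos"
  shows False
proof -
  have roots: "\<alpha> \<in> Phi" "\<beta> \<in> Phi" "\<gamma> \<in> Phi" using pos pos_roots by auto
  define p where "p = 2 * (\<alpha> \<bullet> \<beta>) / (\<beta> \<bullet> \<beta>)"
  define p' where "p' = 2 * (\<alpha> \<bullet> \<beta>) / (\<alpha> \<bullet> \<alpha>)"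
  define q where "q = 2 * (\<alpha> \<bullet> \<gamma>) / (\<gamma> \<bullet> \<gamma>)"
  define q' where "q' = 2 * (\<alpha> \<bullet> \<gamma>) / (\<alpha> \<bullet> \<alpha>)"
  have ints: "p \<in> \<int>" "p' \<in> \<int>" "q \<in> \<int>" "q' \<in> \<int>"
    using cartan_integer[OF roots(2,1)] cartan_integer[OF roots(1,2)]
      cartan_integer[OF roots(3,1)] cartan_integer[OF roots(1,3)]
    unfolding p_def p'_def q_def q'_def by (simp_all add: inner_commute)
  have norms: "\<alpha> \<bullet> \<alpha> > 0" "\<beta> \<bullet> \<beta> > 0" "\<gamma> \<bullet> \<gamma> > 0" using roots root_nonzero by auto
  have signs: "p * p' > 0" "p > 0 \<longleftrightarrow> p' > 0" "q * q' > 0" "q > 0 \<longleftrightarrow> q' > 0"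
    unfolding p_def p'_def q_def q'_def using norms ab ag
    by (auto simp: zero_less_divide_iff zero_less_mult_iff simp del: inner_gt_zero_iff)
  have heights: "height \<alpha> > 0" "height \<beta> > 0" "height \<gamma> > 0"
    "height (Z \<alpha>) < 0" "height (Z \<beta>) > 0" "height (Z \<gamma>) > 0"
    using pos Zsigns height_pos height_neg by auto
  note F\<beta> = pair_failure_heights[OF roots(1,2) lZ ZPhi fail_\<beta>, folded p_def p'_def]
  note F\<gamma> = pair_failure_heights[OF roots(1,3) lZ ZPhi fail_\<gamma>, folded q_def q'_def]
  note bessel = bessel_two_orthogonal[OF orth norms, folded p_def p'_def q_def q'_def]
  have "2 * height \<alpha> = p * height \<beta> + q * height \<gamma> \<and>
        2 * height (Z \<alpha>) = p * height (Z \<beta>) + q * height (Z \<gamma>)"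
    if "p * p' + q * q' = 4"
  proof -
    have \<alpha>: "\<alpha> = (p / 2) *\<^sub>R \<beta> + (q / 2) *\<^sub>R \<gamma>" using bessel(2) that .
    have "height (Z \<alpha>) = (p / 2) * height (Z \<beta>) + (q / 2) * height (Z \<gamma>)"
      by (subst \<alpha>) (simp add: linear_add[OF lZ] linear_scale[OF lZ]
          linear_add[OF height_linear] linear_scale[OF height_linear])
    moreover have "height \<alpha> = (p / 2) * height \<beta> + (q / 2) * height \<gamma>"
      by (subst \<alpha>) (simp add: linear_add[OF height_linear] linear_scale[OF height_linear])
    ultimately show ?thesis by simp
  qed
  thus False using two_pairs_contradiction[OF ints signs heights bessel(1) _ F\<beta> F\<gamma>] by blast
qed

text \<open>A descent triple with beta orthogonal to gamma and alpha orthogonal to neither can be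
  rewritten: Z = w^{-1} s_gamma s_beta satisfies the hypotheses of some_rewriting_available, and
  the four failure conditions there are exactly the failures of the four rewritings.\<close>
lemma descent_triple_rewrite_generic:
  assumes w: "w \<in> W" and D: "descent_triple w \<alpha> \<beta> \<gamma>" and orth: "\<beta> \<bullet> \<gamma> = 0"
    and ab: "\<alpha> \<bullet> \<beta> \<noteq> 0" and ag: "\<alpha> \<bullet> \<gamma> \<noteq> 0"
  shows "\<exists>\<alpha>' \<beta>' \<gamma>'. \<beta>' \<bullet> \<gamma>' \<noteq> 0 \<and>
           root_refl \<alpha> \<circ> root_refl \<beta> \<circ> root_refl \<gamma> = root_refl \<alpha>' \<circ> root_refl \<beta>' \<circ> root_refl \<gamma>' \<and>
           descent_triple w \<alpha>' \<beta>' \<gamma>'"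
    (is "\<exists>\<alpha>' \<beta>' \<gamma>'. ?good \<alpha>' \<beta>' \<gamma>'")
proof (rule ccontr)
  assume none: "\<nexists>\<alpha>' \<beta>' \<gamma>'. ?good \<alpha>' \<beta>' \<gamma>'"
  have pos: "\<alpha> \<in> pos" "\<beta> \<in> pos" "\<gamma> \<in> pos" and neg: "- inv w \<gamma> \<in> pos"
    "- inv w (root_refl \<gamma> \<beta>) \<in> pos" "- inv w (root_refl \<gamma> (root_refl \<beta> \<alpha>)) \<in> pos"
    using D unfolding descent_triple_def by auto
  have roots: "\<beta> \<in> Phi" "\<gamma> \<in> Phi" using pos pos_roots by auto
  have lw: "linear (inv w)" using weyl_inv_linear[OF w] .
  have fixed: "root_refl \<gamma> \<beta> = \<beta>" "root_refl \<beta> \<gamma> = \<gamma>"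
    using orth by (simp_all add: root_refl_orth inner_commute)
  have new_orth: "root_refl \<beta> \<alpha> \<bullet> \<gamma> = \<alpha> \<bullet> \<gamma>" "root_refl \<gamma> \<alpha> \<bullet> \<beta> = \<alpha> \<bullet> \<beta>"
    using root_refl_inner[of \<beta> \<alpha> \<gamma>] root_refl_inner[of \<gamma> \<alpha> \<beta>] fixed by simp_all
  define Z where "Z = (\<lambda>r. inv w (root_refl \<gamma> (root_refl \<beta> r)))"
  have "linear Z" unfolding Z_def
    using linear_compose[OF linear_compose[OF root_refl_linear root_refl_linear] lw] by (simp add: o_def)
  moreover have "\<And>r. r \<in> Phi \<Longrightarrow> Z r \<in> Phi"
    unfolding Z_def using weyl_inv_roots[OF w] refl_closed roots by simp
  moreover have "- Z \<alpha> \<in> pos" "Z \<beta> \<in> pos" "Z \<gamma> \<in> pos"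
    unfolding Z_def using neg fixed linear_neg[OF lw]
      root_refl_self[OF root_nonzero[OF roots(1)]] root_refl_self[OF root_nonzero[OF roots(2)]] by simp_all
  moreover have "root_refl \<alpha> \<beta> \<notin> pos \<or> - Z (root_refl \<beta> \<alpha>) \<notin> pos"
    using none descent_triple_conj_first[OF D] refl_triple_conj_first[of \<alpha> \<beta> \<gamma>] ag
    unfolding Z_def by auto
  moreover have "root_refl \<beta> \<alpha> \<notin> pos \<or> Z (root_refl \<alpha> \<beta>) \<notin> pos"
    using none descent_triple_conj_second[OF w D] refl_triple_conj_second new_orth(1) ag
    unfolding Z_def by metis
  moreover have "root_refl \<alpha> \<gamma> \<notin> pos \<or> - Z (root_refl \<gamma> \<alpha>) \<notin> pos"
    using none descent_triple_orth_first[OF orth D] refl_triple_orth_first[OF orth] ab root_refl_commute[OF orth]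
    unfolding Z_def by auto
  moreover have "root_refl \<gamma> \<alpha> \<notin> pos \<or> Z (root_refl \<alpha> \<gamma>) \<notin> pos"
    using none descent_triple_orth_second[OF w orth D] refl_triple_orth_second[OF orth] new_orth(2) ab
    unfolding Z_def by metis
  ultimately show False using some_rewriting_available[OF pos orth ab ag] by blast
qed

lemma descent_triple_rewrite:
  assumes w: "w \<in> W" and D: "descent_triple w \<alpha> \<beta> \<gamma>" and nonorth: "\<alpha> \<bullet> \<beta> \<noteq> 0 \<or> \<alpha> \<bullet> \<gamma> \<noteq> 0"
  shows "\<exists>\<alpha>' \<beta>' \<gamma>'. \<beta>' \<bullet> \<gamma>' \<noteq> 0 \<and>
           root_refl \<alpha> \<circ> root_refl \<beta> \<circ> root_refl \<gamma> = root_refl \<alpha>' \<circ> root_refl \<beta>' \<circ> root_refl \<gamma>' \<and>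
           descent_triple w \<alpha>' \<beta>' \<gamma>'"
proof (cases "\<beta> \<bullet> \<gamma> = 0")
  case False
  thus ?thesis using D by blast
next
  case orth: True
  have neg: "- inv w (root_refl \<gamma> (root_refl \<beta> \<alpha>)) \<in> pos" and pos: "\<beta> \<in> pos" "\<gamma> \<in> pos"
    using D unfolding descent_triple_def by auto
  consider (\<alpha>\<beta>_orth) "\<alpha> \<bullet> \<beta> = 0" | (\<alpha>\<gamma>_orth) "\<alpha> \<bullet> \<gamma> = 0" | (generic) "\<alpha> \<bullet> \<beta> \<noteq> 0" "\<alpha> \<bullet> \<gamma> \<noteq> 0"
    by blast
  thus ?thesis
  proof cases
    case \<alpha>\<beta>_orth
    hence "root_refl \<alpha> \<beta> = \<beta>" "root_refl \<beta> \<alpha> = \<alpha>"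
      by (simp_all add: root_refl_orth inner_commute)
    hence "descent_triple w (root_refl \<alpha> \<beta>) \<alpha> \<gamma>"
      using descent_triple_conj_first[OF D] pos neg by simp
    thus ?thesis using refl_triple_conj_first \<alpha>\<beta>_orth nonorth by blast
  next
    case \<alpha>\<gamma>_orth
    have "root_refl \<beta> \<alpha> \<bullet> \<gamma> = 0"
      using root_refl_inner[of \<beta> \<alpha> \<gamma>] orth \<alpha>\<gamma>_orth by (simp add: root_refl_orth inner_commute)
    hence "root_refl \<gamma> (root_refl \<beta> \<alpha>) = root_refl \<beta> \<alpha>" by (rule root_refl_orth)
    moreover have "root_refl \<alpha> \<gamma> = \<gamma>" using \<alpha>\<gamma>_orth by (simp add: root_refl_orth inner_commute)
    ultimately have "descent_triple w (root_refl \<alpha> \<gamma>) \<alpha> \<beta>"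
      using descent_triple_orth_first[OF orth D] pos neg by simp
    thus ?thesis using refl_triple_orth_first[OF orth] \<alpha>\<gamma>_orth nonorth by blast
  next
    case generic
    thus ?thesis using descent_triple_rewrite_generic[OF w D orth] by blast
  qed
qed

end

theorem mainTheorem19:
  fixes \<Phi> \<Delta> :: "'a::euclidean_space set"
    and \<alpha> \<beta> \<gamma> :: 'a and w :: "'a \<Rightarrow> 'a"
  assumes "root_system \<Phi>" and "root_basis \<Phi> \<Delta>"
    and "\<alpha> \<in> pos_roots \<Phi> \<Delta>" "\<beta> \<in> pos_roots \<Phi> \<Delta>" "\<gamma> \<in> pos_roots \<Phi> \<Delta>"
    and "w \<in> weyl_group \<Phi>"
    and "int (weyl_length \<Delta> (root_refl \<alpha> \<circ> root_refl \<beta> \<circ> root_refl \<gamma> \<circ> w)) = int (weyl_length \<Delta> (root_refl \<beta> \<circ> root_refl \<gamma> \<circ> w)) - 1"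
    and "int (weyl_length \<Delta> (root_refl \<beta> \<circ> root_refl \<gamma> \<circ> w)) - 1 = int (weyl_length \<Delta> (root_refl \<gamma> \<circ> w)) - 2"
    and "int (weyl_length \<Delta> (root_refl \<gamma> \<circ> w)) - 2 = int (weyl_length \<Delta> w) - 3"
    and "\<alpha> \<bullet> \<beta> \<noteq> 0 \<or> \<alpha> \<bullet> \<gamma> \<noteq> 0"
  shows "\<exists>\<alpha>' \<in> pos_roots \<Phi> \<Delta>. \<exists>\<beta>' \<in> pos_roots \<Phi> \<Delta>. \<exists>\<gamma>' \<in> pos_roots \<Phi> \<Delta>.
           \<beta>' \<bullet> \<gamma>' \<noteq> 0 \<and>
           root_refl \<alpha> \<circ> root_refl \<beta> \<circ> root_refl \<gamma> = root_refl \<alpha>' \<circ> root_refl \<beta>' \<circ> root_refl \<gamma>' \<and>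
           int (weyl_length \<Delta> (root_refl \<alpha>' \<circ> root_refl \<beta>' \<circ> root_refl \<gamma>' \<circ> w)) = int (weyl_length \<Delta> (root_refl \<beta>' \<circ> root_refl \<gamma>' \<circ> w)) - 1 \<and>
           int (weyl_length \<Delta> (root_refl \<beta>' \<circ> root_refl \<gamma>' \<circ> w)) - 1 = int (weyl_length \<Delta> (root_refl \<gamma>' \<circ> w)) - 2 \<and>
           int (weyl_length \<Delta> (root_refl \<gamma>' \<circ> w)) - 2 = int (weyl_length \<Delta> w) - 3"
proof -
  interpret based_root_system \<Phi> \<Delta> using assms(1,2) by unfold_locales
  have "length_chain w \<alpha> \<beta> \<gamma>" using assms(7-9) unfolding length_chain_def by blast
  hence "descent_triple w \<alpha> \<beta> \<gamma>" using length_chain_descent[OF assms(6,3,4,5)] by blast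
  then obtain \<alpha>' \<beta>' \<gamma>' where new: "\<beta>' \<bullet> \<gamma>' \<noteq> 0" "descent_triple w \<alpha>' \<beta>' \<gamma>'"
    and same: "root_refl \<alpha> \<circ> root_refl \<beta> \<circ> root_refl \<gamma> = root_refl \<alpha>' \<circ> root_refl \<beta>' \<circ> root_refl \<gamma>'"
    using descent_triple_rewrite[OF assms(6) _ assms(10)] by blast
  have "int (weyl_length \<Delta> (root_refl \<alpha>' \<circ> root_refl \<beta>' \<circ> root_refl \<gamma>' \<circ> w)) = int (weyl_length \<Delta> w) - 3"
    using assms(7-9) same by simp
  hence "length_chain w \<alpha>' \<beta>' \<gamma>'" using descent_length_chain[OF assms(6) new(2)] by blast
  thus ?thesis using new same unfolding length_chain_def descent_triple_def by blast
qed

end
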